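(* Let $n\ge3$ and suppose $T=T_\lambda(r,m)$ acts linearly and inner faithfully on $\Bbbk\overline{Q}$ so that $g$ acts by a reflection: $g\cdot e_i=e_{n-(d+i)}$, $g\cdot a_i=\mu_ia^*_{n-(d+i+1)}$, $g\cdot a_i^*=\mu_i^*a_{n-(d+i+1)}$ for some integer $0<d\le n-1$ and $\mu_i,\mu_i^*\in\Bbbk^\times$. Let $\sigma$ be the quiver-Taft map of the action. (1) If $j$ is a vertex with $g\cdot j=j$, then there exist $c_j,c_j^*\in\Bbbk$ with $$\sigma(a_{j-1})=-c_j^*a_{j-1},\quad \sigma(a_{j-1}^* )=-\mu_j^{-1}\mu^*_{j-1}c_ja_j,\quad \sigma(a_j)=c_ja^*_{j-1},\quad \sigma(a_j^* )=c_j^*a_j^*.$$ (2) If $k$ is a vertex with $g\cdot k=k+1$ and $g\cdot(k+1)=k$, then there exists $c_k\in\Bbbk$ with $\sigma(a_k)=c_ke_k$ and $\sigma(a_k^* )=\lambda\mu_k^*c_ke_{k+1}$; if $c_k\neq0$ then $\lambda^2\mu_k\mu_k^*=1$. (3) If $i$ is neither $j-1$ nor $j$ for any vertex $j$ fixed by $g$, and is not a vertex $k$ as in (2), then $\sigma(a_i)=\sigma(a_i^* )=0$.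
   Context: Let $\Bbbk$ be a field, $r>1$ and $m$ positive integers with $r\mid m$, and $\lambda\in\Bbbk$ a primitive $r$-th root of unity, with $r$ coprime to the characteristic of $\Bbbk$. The generalized Taft algebra $T=T_\lambda(r,m)$ is the Hopf algebra generated by $g,x$ with relations $gx=\lambda xg$, $g^m=1$, $x^r=0$, $\Delta(g)=g\otimes g$, $\Delta(x)=1\otimes x+x\otimes g$, $\varepsilon(g)=1,\varepsilon(x)=0$, $S(g)=g^{-1}$, $S(x)=-xg^{-1}$. An action of $T$ on an algebra $A$ is a $T$-module algebra structure; so $g$ acts by an algebra automorphism and $x\cdot(ab)=a(x\cdot b)+(x\cdot a)(g\cdot b)$. It is inner faithful if no nonzero Hopf ideal $I$ of $T$ satisfies $I\cdot A=0$. Vertex indices are taken modulo $n$. $\overline{Q}$ has vertices $0,\dots,n-1$ and arrows $a_i:i\to i+1$, $a_i^*:i+1\to i$; in $\Bbbk\overline{Q}$, $e_i$ is the trivial path at $i$, $s(a),t(a)$ source and target, and $pq$ is concatenation ($p$ then $q$) if $t(p)=s(q)$, else $0$. A linear action: $g$ acts by a path-length-preserving automorphism ($g\cdot e_i=e_{g\cdot i}$) and $x$ maps vertices into the span of vertices and arrows into the span of vertices and arrows. Then there are scalars $\gamma_i$ with $x\cdot e_i=\gamma_ie_i-\gamma_i\lambda^{-1}e_{g\cdot i}$; the quiver-Taft map $\sigma$ is the linear map on the span of vertices and arrows with $\sigma(e_i)=0$ and $\sigma(a)=x\cdot a-\gamma_{t(a)}a+\gamma_{s(a)}\lambda^{-1}(g\cdot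 a)$ for arrows $a$. (It satisfies $\sigma(a)=e_{s(a)}\sigma(a)e_{g\cdot t(a)}$ and $\sigma(g\cdot a)=\lambda^{-1}g\cdot\sigma(a)$.) *)

theory Defs
  imports Main
begin

text \<open>Arrows: Fw i is a_i : i -> i+1, Bw i is a_i^* : i+1 -> i (indices mod n).\<close>
datatype arr = Fw nat | Bw nat

fun arr_idx :: "arr \<Rightarrow> nat" where
  "arr_idx (Fw i) = i" | "arr_idx (Bw i) = i"

fun asrc :: "nat \<Rightarrow> arr \<Rightarrow> nat" where
  "asrc n (Fw i) = i mod n" | "asrc n (Bw i) = (i + 1) mod n"

fun atgt :: "nat \<Rightarrow> arr \<Rightarrow> nat" where
  "atgt n (Fw i) = (i + 1) mod n" | "atgt n (Bw i) = i mod n"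

type_synonym path = "nat \<times> arr list"

fun chain :: "nat \<Rightarrow> nat \<Rightarrow> arr list \<Rightarrow> bool" where
  "chain n v [] = True"
| "chain n v (a # as) = (arr_idx a < n \<and> asrc n a = v \<and> chain n (atgt n a) as)"

definition valid_path :: "nat \<Rightarrow> path \<Rightarrow> bool" where
  "valid_path n p = (fst p < n \<and> chain n (fst p) (snd p))"

fun pend :: "nat \<Rightarrow> path \<Rightarrow> nat" where
  "pend n (v, []) = v"
| "pend n (v, as) = atgt n (last as)"

definition PA :: "nat \<Rightarrow> (path \<Rightarrow> 'k::field) set" where
  "PA n = {f. finite {p. f p \<noteq> 0} \<and> (\<forall>p. f p \<noteq> 0 \<longrightarrow> valid_path n p)}"

definition pzero :: "path \<Rightarrow> 'k::field" where
  "pzero = (\<lambda>_. 0)"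

definition padd :: "(path \<Rightarrow> 'k::field) \<Rightarrow> (path \<Rightarrow> 'k) \<Rightarrow> path \<Rightarrow> 'k" where
  "padd f h = (\<lambda>p. f p + h p)"

definition psmult :: "'k::field \<Rightarrow> (path \<Rightarrow> 'k) \<Rightarrow> path \<Rightarrow> 'k" where
  "psmult c f = (\<lambda>p. c * f p)"

text \<open>Multiplication = concatenation (p then q), extended bilinearly.\<close>
definition pmul :: "nat \<Rightarrow> (path \<Rightarrow> 'k::field) \<Rightarrow> (path \<Rightarrow> 'k) \<Rightarrow> path \<Rightarrow> 'k" where
  "pmul n f h = (\<lambda>(v, as). \<Sum>k\<in>{0..length as}.
      f (v, take k as) * h (pend n (v, take k as), drop k as))"

definition pone :: "nat \<Rightarrow> path \<Rightarrow> 'k::field" where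
  "pone n = (\<lambda>(v, as). if v < n \<and> as = [] then 1 else 0)"

definition vtx :: "nat \<Rightarrow> path \<Rightarrow> 'k::field" where
  "vtx i = (\<lambda>p. if p = (i, []) then 1 else 0)"

definition arrow :: "nat \<Rightarrow> arr \<Rightarrow> path \<Rightarrow> 'k::field" where
  "arrow n a = (\<lambda>p. if p = (asrc n a, [a]) then 1 else 0)"

text \<open>An element of T is given by its coefficients f(i,j) w.r.t. the basis x^i g^j,
  0 <= i < r, 0 <= j < m.\<close>
definition tB :: "nat \<Rightarrow> nat \<Rightarrow> (nat \<times> nat) set" where
  "tB r m = {..<r} \<times> {..<m}"

definition Tset :: "nat \<Rightarrow> nat \<Rightarrow> (nat \<times> nat \<Rightarrow> 'k::field) set" where
  "Tset r m = {f. \<forall>p. p \<notin> tB r m \<longrightarrow> f p = 0}"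

definition tbasis :: "nat \<times> nat \<Rightarrow> nat \<times> nat \<Rightarrow> 'k::field" where
  "tbasis q = (\<lambda>p. if p = q then 1 else 0)"

text \<open>(x^a g^b)(x^c g^e) = lam^(b c) x^(a+c) g^(b+e), using g x = lam x g, g^m = 1, x^r = 0.\<close>
definition tmul :: "'k::field \<Rightarrow> nat \<Rightarrow> nat \<Rightarrow> (nat \<times> nat \<Rightarrow> 'k) \<Rightarrow> (nat \<times> nat \<Rightarrow> 'k) \<Rightarrow> nat \<times> nat \<Rightarrow> 'k" where
  "tmul lam r m f h = (\<lambda>(i, j). if i < r \<and> j < m then
     (\<Sum>(a, b)\<in>tB r m. \<Sum>(c, e)\<in>tB r m.
        if a + c = i \<and> (b + e) mod m = j then lam ^ (b * c) * f (a, b) * h (c, e) else 0)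
     else 0)"

definition tsmult :: "'k::field \<Rightarrow> (nat \<times> nat \<Rightarrow> 'k) \<Rightarrow> nat \<times> nat \<Rightarrow> 'k" where
  "tsmult c f = (\<lambda>p. c * f p)"

definition tadd :: "(nat \<times> nat \<Rightarrow> 'k::field) \<Rightarrow> (nat \<times> nat \<Rightarrow> 'k) \<Rightarrow> nat \<times> nat \<Rightarrow> 'k" where
  "tadd f h = (\<lambda>p. f p + h p)"

definition tone :: "nat \<times> nat \<Rightarrow> 'k::field" where "tone = tbasis (0, 0)"
definition tx :: "nat \<times> nat \<Rightarrow> 'k::field" where "tx = tbasis (1, 0)"
definition tg :: "nat \<Rightarrow> nat \<times> nat \<Rightarrow> 'k::field" where "tg m = tbasis (0, 1 mod m)"
definition tginv :: "nat \<Rightarrow> nat \<times> nat \<Rightarrow> 'k::field" where "tginv m = tbasis (0, m - 1)"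

text \<open>T \<otimes> T, with coefficients w.r.t. the basis (x^i g^j) \<otimes> (x^k g^l).\<close>
type_synonym 'k tt = "(nat \<times> nat) \<times> (nat \<times> nat) \<Rightarrow> 'k"

definition tens :: "(nat \<times> nat \<Rightarrow> 'k::field) \<Rightarrow> (nat \<times> nat \<Rightarrow> 'k) \<Rightarrow> 'k tt" where
  "tens a b = (\<lambda>(p, q). a p * b q)"

definition ttadd :: "'k::field tt \<Rightarrow> 'k tt \<Rightarrow> 'k tt" where
  "ttadd f h = (\<lambda>pq. f pq + h pq)"

definition ttmul :: "'k::field \<Rightarrow> nat \<Rightarrow> nat \<Rightarrow> 'k tt \<Rightarrow> 'k tt \<Rightarrow> 'k tt" where
  "ttmul lam r m f h = (\<lambda>(p, q).
     \<Sum>(p1, q1)\<in>tB r m \<times> tB r m. \<Sum>(p2, q2)\<in>tB r m \<times> tB r m.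
       f (p1, q1) * h (p2, q2) * tmul lam r m (tbasis p1) (tbasis p2) p
         * tmul lam r m (tbasis q1) (tbasis q2) q)"

text \<open>Comultiplication: Delta(x^i g^j) = Delta(x)^i Delta(g)^j with
  Delta(x) = 1 \<otimes> x + x \<otimes> g, Delta(g) = g \<otimes> g.\<close>
definition delta_basis :: "'k::field \<Rightarrow> nat \<Rightarrow> nat \<Rightarrow> nat \<Rightarrow> nat \<Rightarrow> 'k tt" where
  "delta_basis lam r m i j =
     ttmul lam r m
       ((ttmul lam r m (ttadd (tens tone tx) (tens tx (tg m))) ^^ i) (tens tone tone))
       ((ttmul lam r m (tens (tg m) (tg m)) ^^ j) (tens tone tone))"

definition tdelta :: "'k::field \<Rightarrow> nat \<Rightarrow> nat \<Rightarrow> (nat \<times> nat \<Rightarrow> 'k) \<Rightarrow> 'k tt" where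
  "tdelta lam r m f = (\<lambda>pq. \<Sum>(i, j)\<in>tB r m. f (i, j) * delta_basis lam r m i j pq)"

text \<open>Counit: eps(x^i g^j) = [i = 0].\<close>
definition teps :: "nat \<Rightarrow> (nat \<times> nat \<Rightarrow> 'k::field) \<Rightarrow> 'k" where
  "teps m f = (\<Sum>j<m. f (0, j))"

text \<open>Antipode: S(x^i g^j) = S(g)^j S(x)^i with S(g) = g^(-1), S(x) = - x g^(-1).\<close>
definition antipode_basis :: "'k::field \<Rightarrow> nat \<Rightarrow> nat \<Rightarrow> nat \<Rightarrow> nat \<Rightarrow> nat \<times> nat \<Rightarrow> 'k" where
  "antipode_basis lam r m i j =
     tmul lam r m ((tmul lam r m (tginv m) ^^ j) tone)
       ((tmul lam r m (tsmult (-1) (tmul lam r m tx (tginv m))) ^^ i) tone)"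

definition tantipode :: "'k::field \<Rightarrow> nat \<Rightarrow> nat \<Rightarrow> (nat \<times> nat \<Rightarrow> 'k) \<Rightarrow> nat \<times> nat \<Rightarrow> 'k" where
  "tantipode lam r m f = (\<lambda>p. \<Sum>(i, j)\<in>tB r m. f (i, j) * antipode_basis lam r m i j p)"

text \<open>The subspace I \<otimes> T + T \<otimes> I of T \<otimes> T.\<close>
inductive_set ITTI :: "nat \<Rightarrow> nat \<Rightarrow> (nat \<times> nat \<Rightarrow> 'k::field) set \<Rightarrow> 'k tt set"
  for r m I where
  zero: "(\<lambda>_. 0) \<in> ITTI r m I"
| left: "z \<in> ITTI r m I \<Longrightarrow> a \<in> I \<Longrightarrow> b \<in> Tset r m \<Longrightarrow> ttadd z (tens a b) \<in> ITTI r m I"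
| right: "z \<in> ITTI r m I \<Longrightarrow> a \<in> Tset r m \<Longrightarrow> b \<in> I \<Longrightarrow> ttadd z (tens a b) \<in> ITTI r m I"

definition hopf_ideal :: "'k::field \<Rightarrow> nat \<Rightarrow> nat \<Rightarrow> (nat \<times> nat \<Rightarrow> 'k) set \<Rightarrow> bool" where
  "hopf_ideal lam r m I \<longleftrightarrow>
     I \<subseteq> Tset r m \<and> (\<lambda>_. 0) \<in> I \<and>
     (\<forall>f\<in>I. \<forall>h\<in>I. tadd f h \<in> I) \<and> (\<forall>c. \<forall>f\<in>I. tsmult c f \<in> I) \<and>
     (\<forall>a\<in>Tset r m. \<forall>f\<in>I. tmul lam r m a f \<in> I \<and> tmul lam r m f a \<in> I) \<and>
     (\<forall>f\<in>I. tdelta lam r m f \<in> ITTI r m I) \<and>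
     (\<forall>f\<in>I. teps m f = 0) \<and>
     (\<forall>f\<in>I. tantipode lam r m f \<in> I)"

definition tact :: "nat \<Rightarrow> nat \<Rightarrow> ((path \<Rightarrow> 'k::field) \<Rightarrow> (path \<Rightarrow> 'k)) \<Rightarrow> ((path \<Rightarrow> 'k) \<Rightarrow> (path \<Rightarrow> 'k))
    \<Rightarrow> (nat \<times> nat \<Rightarrow> 'k) \<Rightarrow> (path \<Rightarrow> 'k) \<Rightarrow> path \<Rightarrow> 'k" where
  "tact r m gop xop f a = (\<lambda>p. \<Sum>(i, j)\<in>tB r m. f (i, j) * (xop ^^ i) ((gop ^^ j) a) p)"

definition is_linear_on :: "nat \<Rightarrow> ((path \<Rightarrow> 'k::field) \<Rightarrow> (path \<Rightarrow> 'k)) \<Rightarrow> bool" where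
  "is_linear_on n F \<longleftrightarrow> (\<forall>a\<in>PA n. F a \<in> PA n) \<and>
     (\<forall>a\<in>PA n. \<forall>b\<in>PA n. F (padd a b) = padd (F a) (F b)) \<and>
     (\<forall>c. \<forall>a\<in>PA n. F (psmult c a) = psmult c (F a))"

definition taft_module_algebra :: "nat \<Rightarrow> 'k::field \<Rightarrow> nat \<Rightarrow> nat
    \<Rightarrow> ((path \<Rightarrow> 'k) \<Rightarrow> (path \<Rightarrow> 'k)) \<Rightarrow> ((path \<Rightarrow> 'k) \<Rightarrow> (path \<Rightarrow> 'k)) \<Rightarrow> bool" where
  "taft_module_algebra n lam r m gop xop \<longleftrightarrow>
     is_linear_on n gop \<and> is_linear_on n xop \<and>
     bij_betw gop (PA n) (PA n) \<and>
     (\<forall>a\<in>PA n. \<forall>b\<in>PA n. gop (pmul n a b) = pmul n (gop a) (gop b)) \<and>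
     gop (pone n) = pone n \<and>
     (\<forall>a\<in>PA n. \<forall>b\<in>PA n. xop (pmul n a b) = padd (pmul n a (xop b)) (pmul n (xop a) (gop b))) \<and>
     xop (pone n) = pzero \<and>
     (\<forall>a\<in>PA n. gop (xop a) = psmult lam (xop (gop a))) \<and>
     (\<forall>a\<in>PA n. (gop ^^ m) a = a) \<and>
     (\<forall>a\<in>PA n. (xop ^^ r) a = pzero)"

definition linear_action :: "nat \<Rightarrow> ((path \<Rightarrow> 'k::field) \<Rightarrow> (path \<Rightarrow> 'k)) \<Rightarrow> ((path \<Rightarrow> 'k) \<Rightarrow> (path \<Rightarrow> 'k)) \<Rightarrow> bool" where
  "linear_action n gop xop \<longleftrightarrow>
     (\<forall>i<n. \<exists>j<n. gop (vtx i) = vtx j) \<and>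
     (\<forall>a. arr_idx a < n \<longrightarrow> (\<forall>p. gop (arrow n a) p \<noteq> 0 \<longrightarrow> length (snd p) = 1)) \<and>
     (\<forall>i<n. \<forall>p. xop (vtx i) p \<noteq> 0 \<longrightarrow> snd p = []) \<and>
     (\<forall>a. arr_idx a < n \<longrightarrow> (\<forall>p. xop (arrow n a) p \<noteq> 0 \<longrightarrow> length (snd p) \<le> 1))"

definition inner_faithful :: "nat \<Rightarrow> 'k::field \<Rightarrow> nat \<Rightarrow> nat
    \<Rightarrow> ((path \<Rightarrow> 'k) \<Rightarrow> (path \<Rightarrow> 'k)) \<Rightarrow> ((path \<Rightarrow> 'k) \<Rightarrow> (path \<Rightarrow> 'k)) \<Rightarrow> bool" where
  "inner_faithful n lam r m gop xop \<longleftrightarrow>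
     (\<forall>I. hopf_ideal lam r m I \<longrightarrow> (\<forall>f\<in>I. \<forall>a\<in>PA n. tact r m gop xop f a = pzero)
          \<longrightarrow> I \<subseteq> {\<lambda>_. 0})"

definition quiver_taft_map :: "nat \<Rightarrow> 'k::field \<Rightarrow> ((path \<Rightarrow> 'k) \<Rightarrow> (path \<Rightarrow> 'k)) \<Rightarrow> ((path \<Rightarrow> 'k) \<Rightarrow> (path \<Rightarrow> 'k))
    \<Rightarrow> (nat \<Rightarrow> 'k) \<Rightarrow> arr \<Rightarrow> path \<Rightarrow> 'k" where
  "quiver_taft_map n lam gop xop gamma a = (\<lambda>p.
     xop (arrow n a) p - gamma (atgt n a) * arrow n a p
       + gamma (asrc n a) * inverse lam * gop (arrow n a) p)"

end

theory Submission
  imports Defs "HOL-Number_Theory.Cong"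
begin

(* By the twisted Leibniz rule applied to a = e_s(a) a = a e_t(a), sigma(a) lies in
   e_s(a) (kQ_0 + kQ_1) e_g.t(a).  For n >= 3 this space is spanned by e_s(a) if g.t(a) = s(a),
   by the unique arrow from s(a) to g.t(a) if the two vertices are adjacent, and is zero
   otherwise; for the reflection g.i = -(d + i) this yields the three shapes of the lemma.
   The scalars are linked by sigma(g.a) = lambda^-1 g.sigma(a).  Around a fixed vertex this
   already gives the asserted signs when lambda = -1.  Otherwise lambda^2 <> 1, so
   gamma_i = lambda gamma_g.i = lambda^2 gamma_i forces every gamma_i to vanish; then
   sigma = x on arrows, and x^r = 0 forces the remaining scalars to be zero. *)

section \<open>Arithmetic modulo \<open>n\<close>\<close>

lemma Suc_mod_neq_self:
  assumes "1 < n"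
  shows "Suc x mod n \<noteq> x"
proof (cases "x < n")
  case True
  then show ?thesis using assms by (auto simp: mod_Suc)
next
  case False
  then show ?thesis using mod_less_divisor[of n "Suc x"] assms by linarith
qed

lemma Suc_Suc_mod_neq_self: "2 < n \<Longrightarrow> x < n \<Longrightarrow> Suc (Suc x mod n) mod n \<noteq> x"
  by (simp add: mod_Suc)

lemma Suc_mod_inj: "x < n \<Longrightarrow> y < n \<Longrightarrow> Suc x mod n = Suc y mod n \<Longrightarrow> x = y"
  by (simp add: mod_Suc split: if_splits)

lemma Suc_pred_mod: "j < n \<Longrightarrow> Suc ((j + n - 1) mod n) mod n = j"
  by (cases j) (simp_all add: mod_Suc)

lemma pred_Suc_mod: "i < n \<Longrightarrow> (Suc i mod n + n - 1) mod n = i"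
  by (auto simp: mod_Suc)

lemma diff_mod_eqI:
  fixes x k n :: nat
  assumes "x < n" "k \<le> 2 * n" "(x + k) mod n = 0"
  shows "(2 * n - k) mod n = x"
proof -
  have "[(2 * n - k) + k = x + k] (mod n)"
    using assms by (simp add: cong_def)
  then have "[2 * n - k = x] (mod n)"
    by (rule cong_add_rcancel_nat[THEN iffD1])
  then show ?thesis
    using assms(1) by (simp add: cong_def)
qed

text \<open>The reflection \<open>i \<mapsto> -(d + i)\<close> of \<open>\<int>/n\<close>; the summand \<open>2 * n\<close> keeps the subtraction
  on \<open>nat\<close> from truncating.\<close>

definition mirror :: "nat \<Rightarrow> nat \<Rightarrow> nat \<Rightarrow> nat" where
  "mirror n d i = (2 * n - (d + i)) mod n"

lemma mirror_lt: "0 < n \<Longrightarrow> mirror n d i < n"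
  by (simp add: mirror_def)

lemma mirror_add_mod: "d + i \<le> 2 * n \<Longrightarrow> (mirror n d i + d + i) mod n = 0"
proof -
  assume "d + i \<le> 2 * n"
  then have "(2 * n - (d + i)) + d + i = n * 2" by simp
  then show ?thesis
    unfolding mirror_def by (metis mod_add_left_eq mod_mult_self1_is_0 add.assoc)
qed

lemma mirror_eqI: "x < n \<Longrightarrow> d + i \<le> 2 * n \<Longrightarrow> (x + d + i) mod n = 0 \<Longrightarrow> mirror n d i = x"
  unfolding mirror_def by (rule diff_mod_eqI) (simp_all add: add.assoc)

lemma mirror_mirror:
  assumes "d \<le> n" "i < n"
  shows "mirror n d (mirror n d i) = i"
proof (rule mirror_eqI)
  have "mirror n d i < n" using assms by (simp add: mirror_lt)
  then show "d + mirror n d i \<le> 2 * n" using assms by simp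
  show "(i + d + mirror n d i) mod n = 0"
    using mirror_add_mod[of d i n] assms by (simp add: ac_simps)
qed (fact assms)

lemma mirror_Suc_add_mod:
  assumes "d \<le> n" "i < n"
  shows "(mirror n d (Suc i mod n) + d + Suc i) mod n = 0"
proof -
  have "Suc i mod n < n" using assms(2) by simp
  then have "(mirror n d (Suc i mod n) + d + Suc i mod n) mod n = 0"
    using assms(1) by (intro mirror_add_mod) linarith
  then show ?thesis by (metis mod_add_right_eq)
qed

lemma mirror_Suc_mod:
  assumes "d \<le> n" "i < n"
  shows "(2 * n - (d + i + 1)) mod n = mirror n d (Suc i mod n)"
  using assms mirror_Suc_add_mod[OF assms] by (intro diff_mod_eqI) (simp_all add: mirror_lt ac_simps)

lemma Suc_mirror_Suc_mod:
  assumes "d \<le> n" "i < n"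
  shows "Suc (mirror n d (Suc i mod n)) mod n = mirror n d i"
proof (rule sym, rule mirror_eqI)
  show "Suc (mirror n d (Suc i mod n)) mod n < n" "d + i \<le> 2 * n" using assms by simp_all
  let ?m = "mirror n d (Suc i mod n)"
  have "(Suc ?m mod n + d + i) mod n = (Suc ?m + (d + i)) mod n"
    by (simp only: add.assoc mod_add_left_eq)
  also have "\<dots> = (?m + d + Suc i) mod n" by (simp add: add.assoc)
  finally show "(Suc ?m mod n + d + i) mod n = 0"
    using mirror_Suc_add_mod[OF assms] by simp
qed

section \<open>The path algebra of the double cyclic quiver\<close>

lemma pmul_vtx_left: "pmul n (vtx i) h (v, as) = (if v = i then h (v, as) else 0)"
proof -
  have "pmul n (vtx i) h (v, as) =
      (\<Sum>k\<in>{0..length as}. if k = 0 then (if v = i then h (v, as) else 0) else 0)"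
    unfolding pmul_def split by (rule sum.cong) (auto simp: vtx_def)
  then show ?thesis by (simp add: sum.delta)
qed

lemma pmul_vtx_right: "pmul n h (vtx i) (v, as) = (if pend n (v, as) = i then h (v, as) else 0)"
proof -
  have "pmul n h (vtx i) (v, as) =
      (\<Sum>k\<in>{0..length as}. if k = length as then (if pend n (v, as) = i then h (v, as) else 0) else 0)"
    unfolding pmul_def split by (rule sum.cong) (auto simp: vtx_def)
  then show ?thesis by (simp add: sum.delta)
qed

lemma pmul_padd_left: "pmul n (padd f1 f2) h = padd (pmul n f1 h) (pmul n f2 h)"
  unfolding pmul_def padd_def by (auto simp: algebra_simps sum.distrib)

lemma pmul_padd_right: "pmul n h (padd f1 f2) = padd (pmul n h f1) (pmul n h f2)"
  unfolding pmul_def padd_def by (auto simp: algebra_simps sum.distrib)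

lemma pmul_psmult_left: "pmul n (psmult c f) h = psmult c (pmul n f h)"
  unfolding pmul_def psmult_def by (auto simp: algebra_simps sum_distrib_left)

lemma pmul_psmult_right: "pmul n h (psmult c f) = psmult c (pmul n h f)"
  unfolding pmul_def psmult_def by (auto simp: algebra_simps sum_distrib_left)

lemma psmult_psmult [simp]: "psmult a (psmult b f) = psmult (a * b) f"
  by (simp add: psmult_def mult.assoc)

lemma arrow_nonzero_iff: "(arrow n a p :: 'k::field) \<noteq> 0 \<longleftrightarrow> p = (asrc n a, [a])"
  by (simp add: arrow_def)

lemma arrow_at_source [simp]: "arrow n a (asrc n a, [a]) = 1"
  by (simp add: arrow_def)

lemma psmult_vtx_eq_iff [simp]: "psmult a (vtx v) = psmult b (vtx v) \<longleftrightarrow> a = b"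
  by (metis (mono_tags) mult.right_neutral psmult_def vtx_def)

lemma psmult_arrow_eq_iff [simp]: "psmult a (arrow n x) = psmult b (arrow n x) \<longleftrightarrow> a = b"
  by (metis (mono_tags) mult.right_neutral psmult_def arrow_def)

lemma asrc_lt: "arr_idx a < n \<Longrightarrow> asrc n a < n"
  by (cases a) auto

lemma atgt_lt: "arr_idx a < n \<Longrightarrow> atgt n a < n"
  by (cases a) auto

lemma valid_path_arrow: "arr_idx a < n \<Longrightarrow> valid_path n (asrc n a, [a])"
  by (cases a) (auto simp: valid_path_def)

lemma vtx_PA: "i < n \<Longrightarrow> vtx i \<in> PA n"
  unfolding PA_def vtx_def valid_path_def by auto

lemma arrow_PA: "arr_idx a < n \<Longrightarrow> arrow n a \<in> PA n"
  unfolding PA_def arrow_def valid_path_def by (cases a) auto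

lemma padd_PA: "f \<in> PA n \<Longrightarrow> h \<in> PA n \<Longrightarrow> padd f h \<in> PA n"
  unfolding PA_def padd_def
  by (auto intro: finite_subset[of _ "{p. f p \<noteq> 0} \<union> {p. h p \<noteq> 0}"]; metis add.right_neutral)

lemma psmult_PA: "f \<in> PA n \<Longrightarrow> psmult c f \<in> PA n"
  unfolding PA_def psmult_def by (auto intro: finite_subset[of _ "{p. f p \<noteq> 0}"])

lemma pzero_PA: "pzero \<in> PA n"
  unfolding PA_def pzero_def by simp

lemma vtx_pmul_arrow: "pmul n (vtx (asrc n a)) (arrow n a) = arrow n a"
proof
  fix p :: path
  obtain v as where "p = (v, as)" by fastforce
  then show "pmul n (vtx (asrc n a)) (arrow n a) p = arrow n a p"
    by (auto simp: pmul_vtx_left arrow_def)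
qed

lemma arrow_pmul_vtx: "pmul n (arrow n a) (vtx (atgt n a)) = arrow n a"
proof
  fix p :: path
  obtain v as where "p = (v, as)" by fastforce
  then show "pmul n (arrow n a) (vtx (atgt n a)) p = arrow n a p"
    by (auto simp: pmul_vtx_right arrow_def)
qed

lemma eq_psmult_pointI:
  assumes "\<And>p. f p \<noteq> 0 \<Longrightarrow> p = q"
  shows "f = psmult (f q) (\<lambda>p. if p = q then 1 else 0)"
proof
  fix p show "f p = psmult (f q) (\<lambda>p. if p = q then 1 else 0) p"
    using assms[of p] by (cases "f p = 0") (auto simp: psmult_def)
qed

text \<open>\<open>in_short_span n s v f\<close> means \<open>f \<in> e\<^sub>s (\<Bbbk>Q\<^sub>0 \<oplus> \<Bbbk>Q\<^sub>1) e\<^sub>v\<close>.\<close>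

definition in_short_span :: "nat \<Rightarrow> nat \<Rightarrow> nat \<Rightarrow> (path \<Rightarrow> 'k::zero) \<Rightarrow> bool" where
  "in_short_span n s v f \<longleftrightarrow>
     (\<forall>p. f p \<noteq> 0 \<longrightarrow> valid_path n p \<and> length (snd p) \<le> 1 \<and> fst p = s \<and> pend n p = v)"

lemma in_short_span_point:
  assumes "in_short_span n s v f" "f p \<noteq> 0"
  shows "p = (s, []) \<and> v = s \<or> p = (s, [Fw s]) \<and> v = Suc s mod n
    \<or> p = (s, [Bw v]) \<and> s = Suc v mod n"
proof -
  obtain w as where p: "p = (w, as)" by fastforce
  have valid: "valid_path n p" and len: "length as \<le> 1" and w: "w = s" and v: "pend n p = v"
    using assms p unfolding in_short_span_def by auto
  show ?thesis
  proof (cases as)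
    case Nil
    then show ?thesis using p w v by simp
  next
    case (Cons b bs)
    then have "as = [b]" using len by simp
    then show ?thesis using p w v valid by (cases b) (auto simp: valid_path_def)
  qed
qed

lemma in_short_span_vtx:
  assumes "1 < n" "in_short_span n s s f"
  shows "f = psmult (f (s, [])) (vtx s)"
  unfolding vtx_def
proof (rule eq_psmult_pointI)
  fix p assume "f p \<noteq> 0"
  from in_short_span_point[OF assms(2) this] show "p = (s, [])"
    using Suc_mod_neq_self[OF assms(1), of s] by auto
qed

lemma in_short_span_Fw:
  assumes "2 < n" "s < n" "in_short_span n s (Suc s mod n) f"
  shows "f = psmult (f (s, [Fw s])) (arrow n (Fw s))"
  unfolding arrow_def asrc.simps mod_less[OF assms(2)]
proof (rule eq_psmult_pointI)
  fix p assume "f p \<noteq> 0"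
  from in_short_span_point[OF assms(3) this] show "p = (s, [Fw s])"
    using Suc_mod_neq_self[of n s] Suc_Suc_mod_neq_self[OF assms(1,2)] assms(1) by auto
qed

lemma in_short_span_Bw:
  assumes "2 < n" "v < n" "in_short_span n (Suc v mod n) v f"
  shows "f = psmult (f (Suc v mod n, [Bw v])) (arrow n (Bw v))"
  unfolding arrow_def asrc.simps Suc_eq_plus1[symmetric]
proof (rule eq_psmult_pointI)
  fix p assume "f p \<noteq> 0"
  from in_short_span_point[OF assms(3) this] show "p = (Suc v mod n, [Bw v])"
    using Suc_mod_neq_self[of n v] Suc_Suc_mod_neq_self[OF assms(1,2)] assms(1) by auto
qed

lemma in_short_span_zero:
  assumes "in_short_span n s v f" "v \<noteq> s" "v \<noteq> Suc s mod n" "s \<noteq> Suc v mod n"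
  shows "f = pzero"
  using in_short_span_point[OF assms(1)] assms(2-4) unfolding pzero_def by fastforce

section \<open>Linear actions and the quiver-Taft map\<close>

lemma quiver_taft_map_eq:
  "quiver_taft_map n lam gop xop gamma a = padd (xop (arrow n a))
     (padd (psmult (- gamma (atgt n a)) (arrow n a))
       (psmult (gamma (asrc n a) * inverse lam) (gop (arrow n a))))"
  unfolding quiver_taft_map_def padd_def psmult_def by (auto simp: algebra_simps)

locale linear_taft_action =
  fixes n :: nat and lam :: "'k::field" and r m :: nat
    and gop xop :: "(path \<Rightarrow> 'k) \<Rightarrow> (path \<Rightarrow> 'k)"
    and G :: "nat \<Rightarrow> nat" and gamma :: "nat \<Rightarrow> 'k"
  assumes module_algebra: "taft_module_algebra n lam r m gop xop"
    and linear: "linear_action n gop xop"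
    and lam_nz: "lam \<noteq> 0" and lam_ne_1: "lam \<noteq> 1"
    and G_lt: "i < n \<Longrightarrow> G i < n"
    and gop_vtx: "i < n \<Longrightarrow> gop (vtx i) = vtx (G i)"
    and xop_vtx: "i < n \<Longrightarrow> xop (vtx i) =
      padd (psmult (gamma i) (vtx i)) (psmult (- (gamma i * inverse lam)) (vtx (G i)))"
begin

abbreviation \<sigma> :: "arr \<Rightarrow> path \<Rightarrow> 'k" where
  "\<sigma> \<equiv> quiver_taft_map n lam gop xop gamma"

lemma gop_PA: "a \<in> PA n \<Longrightarrow> gop a \<in> PA n"
  and gop_padd: "a \<in> PA n \<Longrightarrow> b \<in> PA n \<Longrightarrow> gop (padd a b) = padd (gop a) (gop b)"
  and gop_psmult: "a \<in> PA n \<Longrightarrow> gop (psmult c a) = psmult c (gop a)"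
  and xop_PA: "a \<in> PA n \<Longrightarrow> xop a \<in> PA n"
  and xop_psmult: "a \<in> PA n \<Longrightarrow> xop (psmult c a) = psmult c (xop a)"
  and xop_pmul: "a \<in> PA n \<Longrightarrow> b \<in> PA n \<Longrightarrow>
    xop (pmul n a b) = padd (pmul n a (xop b)) (pmul n (xop a) (gop b))"
  and gop_xop: "a \<in> PA n \<Longrightarrow> gop (xop a) = psmult lam (xop (gop a))"
  and xop_nilpotent: "a \<in> PA n \<Longrightarrow> (xop ^^ r) a = pzero"
  using module_algebra unfolding taft_module_algebra_def is_linear_on_def by auto

lemma G_inj:
  assumes "i < n" "j < n" "G i = G j"
  shows "i = j"
proof -
  have "inj_on gop (PA n)"
    using module_algebra bij_betw_imp_inj_on unfolding taft_module_algebra_def by blast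
  then have "vtx i = (vtx j :: path \<Rightarrow> 'k)"
    using assms gop_vtx vtx_PA by (metis inj_onD)
  then have "(vtx i (i, []) :: 'k) = vtx j (i, [])" by simp
  then show ?thesis by (simp add: vtx_def split: if_splits)
qed

text \<open>Comparing the coefficients of \<open>e\<^sub>G\<^sub>i\<close> in \<open>g\<cdot>(x\<cdot>e\<^sub>i) = \<lambda> x\<cdot>(g\<cdot>e\<^sub>i)\<close>.\<close>

lemma gamma_eq_lam_gamma_G:
  assumes i: "i < n"
  shows "gamma i = lam * gamma (G i)"
proof -
  let ?j = "G i"
  have j: "?j < n" using G_lt[OF i] .
  have "gop (xop (vtx i)) = psmult lam (xop (gop (vtx i)))"
    using gop_xop[OF vtx_PA[OF i]] .
  then have "padd (psmult (gamma i) (vtx ?j)) (psmult (- (gamma i * inverse lam)) (vtx (G ?j)))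
      = psmult lam (padd (psmult (gamma ?j) (vtx ?j)) (psmult (- (gamma ?j * inverse lam)) (vtx (G ?j))))"
    using i j by (simp add: xop_vtx gop_vtx gop_padd gop_psmult psmult_PA vtx_PA)
  from fun_cong[OF this, of "(?j, [])"]
  have coeff: "gamma i - (if G ?j = ?j then gamma i * inverse lam else 0)
      = lam * (gamma ?j - (if G ?j = ?j then gamma ?j * inverse lam else 0))"
    by (auto simp: padd_def psmult_def vtx_def)
  show ?thesis
  proof (cases "G ?j = ?j")
    case True
    then have "?j = i" using G_inj[OF j i] by simp
    then have "(1 - lam) * (gamma i * (1 - inverse lam)) = 0"
      using coeff True by (simp add: algebra_simps)
    moreover have "inverse lam \<noteq> 1"
      using lam_ne_1 by (metis inverse_1 inverse_inverse_eq)
    then have "1 - inverse lam \<noteq> 0" by simp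
    ultimately have "gamma i = 0"
      using lam_ne_1 by simp
    then show ?thesis using \<open>?j = i\<close> by simp
  qed (use coeff in simp)
qed

context
  fixes a b :: arr and c :: 'k
  assumes a: "arr_idx a < n" and b: "arr_idx b < n"
    and gop_arrow: "gop (arrow n a) = psmult c (arrow n b)"
    and asrc_image: "asrc n b = G (asrc n a)" and atgt_image: "atgt n b = G (atgt n a)"
begin

lemma sigma_value:
  "\<sigma> a p = xop (arrow n a) p - gamma (atgt n a) * arrow n a p
     + gamma (asrc n a) * inverse lam * (c * arrow n b p)"
  unfolding quiver_taft_map_def gop_arrow psmult_def ..

text \<open>Both lemmas apply the twisted Leibniz rule to \<open>a = e\<^sub>s a = a e\<^sub>t\<close>.\<close>

lemma sigma_source:
  assumes "\<sigma> a p \<noteq> 0"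
  shows "fst p = asrc n a"
proof (rule ccontr)
  let ?s = "asrc n a"
  obtain v as where p: "p = (v, as)" by fastforce
  assume "fst p \<noteq> ?s"
  then have v: "v \<noteq> ?s" using p by simp
  have "xop (arrow n a) =
      padd (pmul n (vtx ?s) (xop (arrow n a))) (pmul n (xop (vtx ?s)) (gop (arrow n a)))"
    using xop_pmul[OF vtx_PA[OF asrc_lt[OF a]] arrow_PA[OF a]] by (simp add: vtx_pmul_arrow)
  from fun_cong[OF this, of p]
  have "xop (arrow n a) p = pmul n (xop (vtx ?s)) (psmult c (arrow n b)) p"
    using v p by (simp add: padd_def pmul_vtx_left gop_arrow)
  also have "\<dots> = - (gamma ?s * inverse lam) * (c * arrow n b p)"
    using v p asrc_image unfolding xop_vtx[OF asrc_lt[OF a]]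
    by (simp only: pmul_padd_left pmul_psmult_left)
      (auto simp: padd_def psmult_def pmul_vtx_left arrow_def)
  finally have "\<sigma> a p = - gamma (atgt n a) * arrow n a p"
    unfolding sigma_value by simp
  also have "\<dots> = 0" using v p by (simp add: arrow_def)
  finally show False using assms by simp
qed

lemma sigma_target:
  assumes "\<sigma> a p \<noteq> 0"
  shows "pend n p = G (atgt n a)"
proof (rule ccontr)
  let ?t = "atgt n a"
  obtain v as where p: "p = (v, as)" by fastforce
  assume "pend n p \<noteq> G ?t"
  then have e: "pend n (v, as) \<noteq> G ?t" using p by simp
  have "xop (arrow n a) =
      padd (pmul n (arrow n a) (xop (vtx ?t))) (pmul n (xop (arrow n a)) (gop (vtx ?t)))"
    using xop_pmul[OF arrow_PA[OF a] vtx_PA[OF atgt_lt[OF a]]] by (simp add: arrow_pmul_vtx)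
  from fun_cong[OF this, of p]
  have "xop (arrow n a) p = pmul n (arrow n a) (xop (vtx ?t)) p"
    using e p by (simp add: padd_def pmul_vtx_right gop_vtx[OF atgt_lt[OF a]])
  also have "\<dots> = gamma ?t * arrow n a p"
    using e p unfolding xop_vtx[OF atgt_lt[OF a]]
    by (simp only: pmul_padd_right pmul_psmult_right)
      (auto simp: padd_def psmult_def pmul_vtx_right arrow_def)
  finally have "\<sigma> a p = gamma (asrc n a) * inverse lam * (c * arrow n b p)"
    unfolding sigma_value by simp
  also have "\<dots> = 0" using e p atgt_image by (auto simp: arrow_def)
  finally show False using assms by simp
qed

lemma sigma_short_path:
  assumes "\<sigma> a p \<noteq> 0"
  shows "valid_path n p \<and> length (snd p) \<le> 1"
proof (cases "xop (arrow n a) p = 0")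
  case True
  then have "arrow n a p \<noteq> (0::'k) \<or> arrow n b p \<noteq> (0::'k)"
    using assms unfolding sigma_value by auto
  then have "p = (asrc n a, [a]) \<or> p = (asrc n b, [b])"
    by (simp add: arrow_nonzero_iff)
  then show ?thesis
    using valid_path_arrow a b by auto
next
  case False
  then have "valid_path n p"
    using xop_PA[OF arrow_PA[OF a]] unfolding PA_def by (cases p) auto
  moreover have "length (snd p) \<le> 1"
    using linear a False unfolding linear_action_def by blast
  ultimately show ?thesis ..
qed

lemma sigma_in_short_span: "in_short_span n (asrc n a) (G (atgt n a)) (\<sigma> a)"
  unfolding in_short_span_def using sigma_source sigma_target sigma_short_path by blast

lemma sigma_equivariant: "psmult c (\<sigma> b) = psmult (inverse lam) (gop (\<sigma> a))"
proof -
  have gamma_s: "gamma (asrc n a) = lam * gamma (asrc n b)"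
    and gamma_t: "gamma (atgt n a) = lam * gamma (atgt n b)"
    using gamma_eq_lam_gamma_G[OF asrc_lt[OF a]] gamma_eq_lam_gamma_G[OF atgt_lt[OF a]]
      asrc_image atgt_image by simp_all
  have A: "(arrow n a :: path \<Rightarrow> 'k) \<in> PA n" and B: "(arrow n b :: path \<Rightarrow> 'k) \<in> PA n"
    using arrow_PA a b by auto
  have "gop (\<sigma> a) = padd (gop (xop (arrow n a)))
     (padd (psmult (- gamma (atgt n a)) (gop (arrow n a)))
       (psmult (gamma (asrc n a) * inverse lam) (gop (gop (arrow n a)))))"
    unfolding quiver_taft_map_eq
    by (simp add: gop_padd gop_psmult padd_PA psmult_PA A xop_PA gop_PA)
  also have "\<dots> = padd (psmult lam (psmult c (xop (arrow n b))))
     (padd (psmult (- gamma (atgt n a)) (psmult c (arrow n b)))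
       (psmult (gamma (asrc n a) * inverse lam) (psmult c (gop (arrow n b)))))"
    using A B by (simp add: gop_xop gop_arrow xop_psmult gop_psmult del: psmult_psmult)
  finally show ?thesis
    unfolding quiver_taft_map_eq gamma_s gamma_t
    by (auto simp: padd_def psmult_def field_simps lam_nz)
qed

end

lemma xop_exchange_product_zero:
  assumes x: "x \<in> PA n" and y: "y \<in> PA n" and q: "x q \<noteq> 0"
    and xop_x: "xop x = psmult c y" and xop_y: "xop y = psmult e x"
  shows "c * e = 0"
proof -
  have pow: "(xop ^^ (2 * k)) x = psmult ((c * e) ^ k) x" for k
  proof (induction k)
    case 0
    then show ?case by (simp add: psmult_def)
  next
    case (Suc k)
    then have "(xop ^^ (2 * Suc k)) x = xop (xop (psmult ((c * e) ^ k) x))" by simp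
    also have "\<dots> = psmult ((c * e) ^ Suc k) x"
      using x y by (simp add: xop_psmult xop_x xop_y psmult_PA ac_simps)
    finally show ?case .
  qed
  have "(xop ^^ (2 * r)) x = (xop ^^ r) ((xop ^^ r) x)" by (simp add: mult_2 funpow_add)
  also have "\<dots> = pzero" using xop_nilpotent[OF x] xop_nilpotent[OF pzero_PA] by simp
  finally have "psmult ((c * e) ^ r) x = pzero" using pow by simp
  then have "(c * e) ^ r * x q = 0" unfolding psmult_def pzero_def by meson
  then show ?thesis using q by simp
qed

end

section \<open>Actions by a reflection\<close>

locale taft_reflection_action = linear_taft_action n lam r m gop xop "mirror n d" gamma
  for n :: nat and lam :: "'k::field" and r m :: nat
    and gop xop :: "(path \<Rightarrow> 'k) \<Rightarrow> (path \<Rightarrow> 'k)" and d :: nat and gamma :: "nat \<Rightarrow> 'k" +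
  fixes mu mus :: "nat \<Rightarrow> 'k"
  assumes n_ge3: "3 \<le> n" and d_le: "d \<le> n"
    and mu_nz: "i < n \<Longrightarrow> mu i \<noteq> 0" and mus_nz: "i < n \<Longrightarrow> mus i \<noteq> 0"
    and gop_Fw: "i < n \<Longrightarrow>
      gop (arrow n (Fw i)) = psmult (mu i) (arrow n (Bw (mirror n d (Suc i mod n))))"
    and gop_Bw: "i < n \<Longrightarrow>
      gop (arrow n (Bw i)) = psmult (mus i) (arrow n (Fw (mirror n d (Suc i mod n))))"
begin

lemma sigma_Fw_span:
  assumes "i < n"
  shows "in_short_span n i (mirror n d (Suc i mod n)) (\<sigma> (Fw i))"
proof -
  have "in_short_span n (asrc n (Fw i)) (mirror n d (atgt n (Fw i))) (\<sigma> (Fw i))"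
    using assms
    by (intro sigma_in_short_span[of _ "Bw (mirror n d (Suc i mod n))" "mu i"])
      (simp_all add: gop_Fw mirror_lt Suc_mirror_Suc_mod d_le)
  then show ?thesis using assms by simp
qed

lemma sigma_Bw_span:
  assumes "i < n"
  shows "in_short_span n (Suc i mod n) (mirror n d i) (\<sigma> (Bw i))"
proof -
  have "in_short_span n (asrc n (Bw i)) (mirror n d (atgt n (Bw i))) (\<sigma> (Bw i))"
    using assms
    by (intro sigma_in_short_span[of _ "Fw (mirror n d (Suc i mod n))" "mus i"])
      (simp_all add: gop_Bw mirror_lt Suc_mirror_Suc_mod d_le)
  then show ?thesis using assms by simp
qed

lemma sigma_Fw_equivariant:
  assumes "i < n"
  shows "psmult (mu i) (\<sigma> (Bw (mirror n d (Suc i mod n)))) =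
    psmult (inverse lam) (gop (\<sigma> (Fw i)))"
  using assms by (intro sigma_equivariant) (simp_all add: gop_Fw mirror_lt Suc_mirror_Suc_mod d_le)

lemma sigma_Bw_equivariant:
  assumes "i < n"
  shows "psmult (mus i) (\<sigma> (Fw (mirror n d (Suc i mod n)))) =
    psmult (inverse lam) (gop (\<sigma> (Bw i)))"
  using assms by (intro sigma_equivariant) (simp_all add: gop_Bw mirror_lt Suc_mirror_Suc_mod d_le)

lemma gamma_eq_0:
  assumes lam2: "lam\<^sup>2 \<noteq> 1" and i: "i < n"
  shows "gamma i = 0"
proof -
  have "gamma i = lam * (lam * gamma (mirror n d (mirror n d i)))"
    using gamma_eq_lam_gamma_G[OF i] gamma_eq_lam_gamma_G[OF G_lt[OF i]] by simp
  then have "(lam\<^sup>2 - 1) * gamma i = 0"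
    using mirror_mirror[OF d_le i] by (simp add: power2_eq_square algebra_simps)
  then show ?thesis using lam2 by simp
qed

lemma sigma_exchange_product_zero:
  assumes lam2: "lam\<^sup>2 \<noteq> 1" and a: "arr_idx a < n" and b: "arr_idx b < n"
    and \<sigma>a: "\<sigma> a = psmult c (arrow n b)" and \<sigma>b: "\<sigma> b = psmult e (arrow n a)"
  shows "c * e = 0"
proof -
  have xop_eq_\<sigma>: "xop (arrow n x) = \<sigma> x" if "arr_idx x < n" for x
    unfolding quiver_taft_map_def
    using gamma_eq_0[OF lam2 asrc_lt[OF that]] gamma_eq_0[OF lam2 atgt_lt[OF that]] by simp
  show ?thesis
    using xop_exchange_product_zero[OF arrow_PA[OF a] arrow_PA[OF b], of "(asrc n a, [a])" c e]
    by (simp add: xop_eq_\<sigma> a b \<sigma>a \<sigma>b)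
qed

lemma sigma_around_fixed_vertex:
  assumes j: "j < n" and fixed: "mirror n d j = j"
  defines "i \<equiv> (j + n - 1) mod n"
  shows "\<exists>c cs. \<sigma> (Fw i) = psmult (- cs) (arrow n (Fw i))
      \<and> \<sigma> (Bw i) = psmult (- (inverse (mu j) * mus i * c)) (arrow n (Fw j))
      \<and> \<sigma> (Fw j) = psmult c (arrow n (Bw i))
      \<and> \<sigma> (Bw j) = psmult cs (arrow n (Bw j))"
proof -
  have n: "2 < n" using n_ge3 by simp
  have i: "i < n" using j by (simp add: i_def)
  have Suc_i: "Suc i mod n = j" unfolding i_def by (rule Suc_pred_mod[OF j])
  have "mirror n d (Suc j mod n) < n" using j by (simp add: mirror_lt)
  moreover have "Suc (mirror n d (Suc j mod n)) mod n = Suc i mod n"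
    using Suc_mirror_Suc_mod[OF d_le j] fixed Suc_i by simp
  ultimately have mirror_Suc_j: "mirror n d (Suc j mod n) = i"
    using Suc_mod_inj i by blast
  have mirror_i: "mirror n d i = Suc j mod n"
    using mirror_mirror[OF d_le, of "Suc j mod n"] mirror_Suc_j j by simp
  obtain a where a: "\<sigma> (Fw i) = psmult a (arrow n (Fw i))"
    using in_short_span_Fw[OF n i] sigma_Fw_span[OF i] Suc_i fixed by metis
  obtain b where b: "\<sigma> (Bw j) = psmult b (arrow n (Bw j))"
    using in_short_span_Bw[OF n j] sigma_Bw_span[OF j] fixed by metis
  obtain c where c: "\<sigma> (Fw j) = psmult c (arrow n (Bw i))"
    using in_short_span_Bw[OF n i] sigma_Fw_span[OF j] Suc_i mirror_Suc_j by metis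
  obtain e where e: "\<sigma> (Bw i) = psmult e (arrow n (Fw j))"
    using in_short_span_Fw[OF n j] sigma_Bw_span[OF i] Suc_i mirror_i by metis
  have "mu i * b = inverse lam * (a * mu i)"
    using sigma_Fw_equivariant[OF i] by (simp add: a b Suc_i fixed gop_psmult arrow_PA i gop_Fw)
  then have b_a: "b = inverse lam * a" using mu_nz[OF i] by (simp add: ac_simps)
  have "mu j * e = inverse lam * (c * mus i)"
    using sigma_Fw_equivariant[OF j]
    by (simp add: c e mirror_Suc_j gop_psmult arrow_PA i gop_Bw Suc_i fixed)
  then have e_c: "e = inverse lam * (inverse (mu j) * mus i * c)"
    using mu_nz[OF j] lam_nz by (simp add: field_simps)
  have "inverse lam = -1 \<or> a = 0 \<and> c = 0"
  proof (cases "lam = -1")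
    case False
    then have lam2: "lam\<^sup>2 \<noteq> 1" using lam_ne_1 by (simp add: power2_eq_1_iff)
    have "a * a = 0" using i by (intro sigma_exchange_product_zero[OF lam2 _ _ a a]) simp_all
    moreover have "c * e = 0"
      using i j by (intro sigma_exchange_product_zero[OF lam2 _ _ c e]) simp_all
    then have "c * c * (inverse lam * inverse (mu j) * mus i) = 0"
      unfolding e_c by (simp add: ac_simps)
    then have "c = 0" using lam_nz mu_nz[OF j] mus_nz[OF i] by simp
    ultimately show ?thesis by simp
  qed simp
  then have "a = - b" and "e = - (inverse (mu j) * mus i * c)"
    using b_a e_c by auto
  then show ?thesis using a b c e by blast
qed

lemma sigma_at_swapped_edge:
  assumes k: "k < n" and swap: "mirror n d k = Suc k mod n"
  shows "\<exists>c. \<sigma> (Fw k) = psmult c (vtx k)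
      \<and> \<sigma> (Bw k) = psmult (lam * mus k * c) (vtx (Suc k mod n))
      \<and> (c \<noteq> 0 \<longrightarrow> lam\<^sup>2 * mu k * mus k = 1)"
proof -
  have n: "1 < n" using n_ge3 by simp
  have k': "Suc k mod n < n" using k by simp
  have swap': "mirror n d (Suc k mod n) = k" using mirror_mirror[OF d_le k] swap by simp
  obtain c where c: "\<sigma> (Fw k) = psmult c (vtx k)"
    using in_short_span_vtx[OF n] sigma_Fw_span[OF k] swap' by metis
  obtain c' where c': "\<sigma> (Bw k) = psmult c' (vtx (Suc k mod n))"
    using in_short_span_vtx[OF n] sigma_Bw_span[OF k] swap by metis
  have "mu k * c' = inverse lam * c"
    using sigma_Fw_equivariant[OF k] by (simp add: c c' swap' gop_psmult vtx_PA k gop_vtx swap)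
  moreover have "mus k * c = inverse lam * c'"
    using sigma_Bw_equivariant[OF k] by (simp add: c c' swap' gop_psmult vtx_PA k' gop_vtx)
  then have c'_c: "c' = lam * mus k * c"
    using lam_nz by (simp add: field_simps)
  ultimately have "lam\<^sup>2 * mu k * mus k * c = c"
    using lam_nz by (simp add: field_simps power2_eq_square)
  then have "c \<noteq> 0 \<longrightarrow> lam\<^sup>2 * mu k * mus k = 1" by auto
  then show ?thesis using c c' c'_c by blast
qed

lemma sigma_vanishes:
  assumes i: "i < n"
    and not_near_fixed: "\<forall>j<n. mirror n d j = j \<longrightarrow> i \<noteq> (j + n - 1) mod n \<and> i \<noteq> j"
    and not_swapped: "mirror n d i \<noteq> Suc i mod n"
  shows "\<sigma> (Fw i) = pzero \<and> \<sigma> (Bw i) = pzero"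
proof
  let ?i' = "Suc i mod n" and ?m = "mirror n d (Suc i mod n)"
  have i': "?i' < n" using i by simp
  have fixed_i: "mirror n d i \<noteq> i" using not_near_fixed i by blast
  have fixed_i': "?m \<noteq> ?i'" using not_near_fixed i' pred_Suc_mod[OF i] by auto
  have m: "Suc ?m mod n = mirror n d i" using Suc_mirror_Suc_mod[OF d_le i] .
  have m_lt: "?m < n" and mirror_i_lt: "mirror n d i < n" using i by (simp_all add: mirror_lt)
  show "\<sigma> (Fw i) = pzero"
  proof (rule in_short_span_zero[OF sigma_Fw_span[OF i]])
    show "?m \<noteq> i" using mirror_mirror[OF d_le i'] not_swapped by metis
    show "?m \<noteq> ?i'" by (fact fixed_i')
    show "i \<noteq> Suc ?m mod n" using m fixed_i by simp
  qed
  show "\<sigma> (Bw i) = pzero"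
  proof (rule in_short_span_zero[OF sigma_Bw_span[OF i]])
    show "mirror n d i \<noteq> ?i'" by (fact not_swapped)
    show "mirror n d i \<noteq> Suc ?i' mod n"
      using m fixed_i' Suc_mod_inj[OF m_lt i'] by metis
    show "?i' \<noteq> Suc (mirror n d i) mod n"
      using fixed_i Suc_mod_inj[OF i mirror_i_lt] by metis
  qed
qed

end

theorem lemma3p11:
  fixes n r m d :: nat and lam :: "'k::field"
    and gop xop :: "(path \<Rightarrow> 'k) \<Rightarrow> (path \<Rightarrow> 'k)"
    and mu mus gamma :: "nat \<Rightarrow> 'k"
  assumes r_gt1: "r > 1" and m_pos: "m > 0" and r_dvd_m: "r dvd m"
    and lam_root: "lam ^ r = 1" and lam_prim: "\<forall>k. 0 < k \<and> k < r \<longrightarrow> lam ^ k \<noteq> 1"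
    and char_r: "of_nat r \<noteq> (0::'k)"
    and n_ge3: "n \<ge> 3" and d_pos: "0 < d" and d_le: "d \<le> n - 1"
    and modalg: "taft_module_algebra n lam r m gop xop"
    and lin: "linear_action n gop xop"
    and innerf: "inner_faithful n lam r m gop xop"
    and mu_nz: "\<forall>i<n. mu i \<noteq> 0" and mus_nz: "\<forall>i<n. mus i \<noteq> 0"
    and g_vtx: "\<forall>i<n. gop (vtx i) = vtx ((2 * n - (d + i)) mod n)"
    and g_Fw: "\<forall>i<n. gop (arrow n (Fw i)) = psmult (mu i) (arrow n (Bw ((2 * n - (d + i + 1)) mod n)))"
    and g_Bw: "\<forall>i<n. gop (arrow n (Bw i)) = psmult (mus i) (arrow n (Fw ((2 * n - (d + i + 1)) mod n)))"
    and gamma: "\<forall>i<n. xop (vtx i) =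
                  padd (psmult (gamma i) (vtx i))
                       (psmult (- (gamma i * inverse lam)) (vtx ((2 * n - (d + i)) mod n)))"
  shows
    "(\<forall>j<n. (2 * n - (d + j)) mod n = j \<longrightarrow>
        (\<exists>c cs. quiver_taft_map n lam gop xop gamma (Fw ((j + n - 1) mod n))
                  = psmult (- cs) (arrow n (Fw ((j + n - 1) mod n)))
              \<and> quiver_taft_map n lam gop xop gamma (Bw ((j + n - 1) mod n))
                  = psmult (- (inverse (mu j) * mus ((j + n - 1) mod n) * c)) (arrow n (Fw j))
              \<and> quiver_taft_map n lam gop xop gamma (Fw j)
                  = psmult c (arrow n (Bw ((j + n - 1) mod n)))
              \<and> quiver_taft_map n lam gop xop gamma (Bw j)
                  = psmult cs (arrow n (Bw j))))
   \<and> (\<forall>k<n. (2 * n - (d + k)) mod n = (k + 1) mod n \<and> (2 * n - (d + (k + 1) mod n)) mod n = k \<longrightarrow>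
        (\<exists>c. quiver_taft_map n lam gop xop gamma (Fw k) = psmult c (vtx k)
            \<and> quiver_taft_map n lam gop xop gamma (Bw k) = psmult (lam * mus k * c) (vtx ((k + 1) mod n))
            \<and> (c \<noteq> 0 \<longrightarrow> lam ^ 2 * mu k * mus k = 1)))
   \<and> (\<forall>i<n. (\<forall>j<n. (2 * n - (d + j)) mod n = j \<longrightarrow> i \<noteq> (j + n - 1) mod n \<and> i \<noteq> j)
          \<and> \<not> ((2 * n - (d + i)) mod n = (i + 1) mod n \<and> (2 * n - (d + (i + 1) mod n)) mod n = i)
        \<longrightarrow> quiver_taft_map n lam gop xop gamma (Fw i) = pzero
          \<and> quiver_taft_map n lam gop xop gamma (Bw i) = pzero)"
proof -
  have "lam \<noteq> 0" using lam_root r_gt1 by (auto simp: power_0_left)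
  moreover have "lam \<noteq> 1" using lam_prim r_gt1 by force
  moreover have "(2 * n - (d + i + 1)) mod n = mirror n d (Suc i mod n)" if "i < n" for i
    using d_le that by (intro mirror_Suc_mod) simp_all
  ultimately interpret taft_reflection_action n lam r m gop xop d gamma mu mus
    using modalg lin n_ge3 d_le mu_nz mus_nz g_vtx g_Fw g_Bw gamma
    by unfold_locales (simp_all add: mirror_def[symmetric] mirror_lt)
  show ?thesis
    unfolding mirror_def[symmetric] Suc_eq_plus1[symmetric]
  proof (intro conjI[OF _ conjI] allI impI, goal_cases)
    case (1 j)
    then show ?case by (intro sigma_around_fixed_vertex)
  next
    case (2 k)
    then show ?case using sigma_at_swapped_edge by blast
  next
    case (3 i)
    then have "mirror n d i \<noteq> Suc i mod n" using mirror_mirror[OF d_le] by metis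
    then show ?case using sigma_vanishes 3 by blast
  qed
qed

end
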